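(* Let $f,q\in\mathbb{R}[x_1,\dots,x_n]$ with $q\in\mathcal Q(1-x_1^2,\dots,1-x_n^2)_r$ and $r\ge\deg(f)$. Then \[ f+\|f-q\|_{1,\mathrm{cheb}}\in\mathcal Q(1-x_1^2,\dots,1-x_n^2)_{2r}. \]
   Context: $\Sigma[x]_r$ is the cone of sums of squares of polynomials in $x=(x_1,\dots,x_n)$ of total degree at most $r$; $\mathcal Q(1-x_1^2,\dots,1-x_n^2)_r=\Sigma[x]_r+\sum_{i=1}^n(1-x_i^2)\Sigma[x]_{r-2}$. $T_k(x)=\cos(k\arccos x)$ is the Chebyshev polynomial of the first kind; for $\alpha\in\mathbb{N}_0^n$, $T_\alpha(x)=\prod_iT_{\alpha_i}(x_i)$; for $p=\sum_\alpha p_\alpha T_\alpha$, $\|p\|_{1,\mathrm{cheb}}=\sum_\alpha|p_\alpha|$. *)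

theory Defs
  imports Complex_Main "HOL-Library.Poly_Mapping"
begin

text \<open>Multivariate real polynomials: finitely supported maps from monomials
(exponent vectors nat =>0 nat, variable i has index i) to real coefficients.\<close>

type_synonym mpoly = "(nat \<Rightarrow>\<^sub>0 nat) \<Rightarrow>\<^sub>0 real"

definition mconst :: "real \<Rightarrow> mpoly" where
  "mconst c = Poly_Mapping.single 0 c"

definition mvar :: "nat \<Rightarrow> mpoly" where
  "mvar i = Poly_Mapping.single (Poly_Mapping.single i 1) 1"

definition vars_in :: "nat \<Rightarrow> mpoly \<Rightarrow> bool" where
  "vars_in n p \<longleftrightarrow> (\<forall>m\<in>Poly_Mapping.keys (p::mpoly). Poly_Mapping.keys m \<subseteq> {..<n})"

definition total_deg :: "mpoly \<Rightarrow> nat" where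
  "total_deg (p::mpoly) = Max (insert 0 ((\<lambda>m. sum (Poly_Mapping.lookup m) (Poly_Mapping.keys m)) ` Poly_Mapping.keys p))"

text \<open>Sigma[x]_d: sums of squares of polynomials in n variables of degree at most d
(squares of polynomials g with 2 deg g <= d). d is an integer so that negative
degree bounds give the cone {0}.\<close>
definition sos_cone :: "nat \<Rightarrow> int \<Rightarrow> mpoly set" where
  "sos_cone n d = {sum_list (map (\<lambda>g. g * g) gs) | gs.
      \<forall>g\<in>set gs. vars_in n g \<and> 2 * int (total_deg g) \<le> d}"

definition quad_module :: "nat \<Rightarrow> nat \<Rightarrow> mpoly set" where
  "quad_module n r = {s0 + (\<Sum>i<n. (1 - mvar i * mvar i) * s i) | s0 s.
      s0 \<in> sos_cone n (int r) \<and> (\<forall>i<n. s i \<in> sos_cone n (int r - 2))}"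

fun chebT :: "nat \<Rightarrow> nat \<Rightarrow> mpoly" where
  "chebT i 0 = 1"
| "chebT i (Suc 0) = mvar i"
| "chebT i (Suc (Suc k)) = 2 * mvar i * chebT i (Suc k) - chebT i k"

definition chebT_multi :: "(nat \<Rightarrow>\<^sub>0 nat) \<Rightarrow> mpoly" where
  "chebT_multi \<alpha> = (\<Prod>i\<in>Poly_Mapping.keys \<alpha>. chebT i (Poly_Mapping.lookup \<alpha> i))"

text \<open>Chebyshev coefficients: the unique finitely supported family c with
p = sum_alpha c_alpha T_alpha (the T_alpha form a basis).\<close>
definition cheb_coeffs :: "mpoly \<Rightarrow> (nat \<Rightarrow>\<^sub>0 nat) \<Rightarrow>\<^sub>0 real" where
  "cheb_coeffs p = (THE c. p = (\<Sum>\<alpha>\<in>Poly_Mapping.keys c. mconst (Poly_Mapping.lookup c \<alpha>) * chebT_multi \<alpha>))"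

definition cheb_norm1 :: "mpoly \<Rightarrow> real" where
  "cheb_norm1 p = (\<Sum>\<alpha>\<in>Poly_Mapping.keys (cheb_coeffs p). \<bar>Poly_Mapping.lookup (cheb_coeffs p) \<alpha>\<bar>)"

end

theory Submission
  imports Defs
begin

(*
  Write p = f - q in the Chebyshev basis, p = sum_beta c_beta T_beta. The T_beta form a basis
  because T_beta is a nonzero multiple of x^beta plus monomials x^gamma with gamma < beta
  componentwise; since q in Q_r has degree at most r, so has p, hence |beta| <= r for every
  beta that occurs. Now f + ||p|| = q + sum_beta (c_beta T_beta + |c_beta|), and every summand
  is |c_beta| (1 +- T_beta). Telescoping the univariate Pell identity
  T_k^2 + (1 - x^2) U_(k-1)^2 = 1 over the variables gives
  1 - T_beta^2 = sum_i (1 - x_i^2) g_i^2 with deg g_i < |beta|, so that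
  1 +- T_beta = (1 +- T_beta)^2/2 + (1 - T_beta^2)/2 lies in Q_2r.
*)

abbreviation lookup :: "('a \<Rightarrow>\<^sub>0 'b::zero) \<Rightarrow> 'a \<Rightarrow> 'b" where
  "lookup \<equiv> Poly_Mapping.lookup"

abbreviation keys :: "('a \<Rightarrow>\<^sub>0 'b::zero) \<Rightarrow> 'a set" where
  "keys \<equiv> Poly_Mapping.keys"

abbreviation single :: "'a \<Rightarrow> 'b::zero \<Rightarrow> 'a \<Rightarrow>\<^sub>0 'b" where
  "single \<equiv> Poly_Mapping.single"

section \<open>Monomials\<close>

definition monom_deg :: "(nat \<Rightarrow>\<^sub>0 nat) \<Rightarrow> nat" where
  "monom_deg m = sum (lookup m) (keys m)"

definition monom_le :: "(nat \<Rightarrow>\<^sub>0 nat) \<Rightarrow> (nat \<Rightarrow>\<^sub>0 nat) \<Rightarrow> bool" where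
  "monom_le m a \<longleftrightarrow> (\<forall>i. lookup m i \<le> lookup a i)"

lemma monom_deg_superset: "finite A \<Longrightarrow> keys m \<subseteq> A \<Longrightarrow> monom_deg m = sum (lookup m) A"
  unfolding monom_deg_def by (rule sum.mono_neutral_left) (auto simp: in_keys_iff)

lemma monom_deg_add: "monom_deg (a + b) = monom_deg a + monom_deg b"
proof -
  have "finite (keys a \<union> keys b)" "keys (a + b) \<subseteq> keys a \<union> keys b"
    by (simp_all add: keys_add)
  then show ?thesis
    using monom_deg_superset[of "keys a \<union> keys b"] by (simp add: lookup_add sum.distrib)
qed

lemma monom_deg_single [simp]: "monom_deg (single i k) = k"
  by (simp add: monom_deg_def)

lemma monom_deg_eq_0_iff [simp]: "monom_deg m = 0 \<longleftrightarrow> m = 0"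
  by (auto simp: monom_deg_def in_keys_iff intro: poly_mapping_eqI)

lemma monom_le_refl [simp]: "monom_le a a"
  by (simp add: monom_le_def)

lemma monom_le_zero [simp]: "monom_le 0 a"
  by (simp add: monom_le_def)

lemma monom_le_trans: "monom_le m a \<Longrightarrow> monom_le a b \<Longrightarrow> monom_le m b"
  unfolding monom_le_def using order_trans by blast

lemma monom_le_antisym: "monom_le a b \<Longrightarrow> monom_le b a \<Longrightarrow> a = b"
  unfolding monom_le_def by (simp add: poly_mapping_eqI order_antisym)

lemma monom_le_add: "monom_le m a \<Longrightarrow> monom_le m' b \<Longrightarrow> monom_le (m + m') (a + b)"
  by (simp add: monom_le_def lookup_add add_mono)

lemma monom_le_add_right: "monom_le m a \<Longrightarrow> monom_le m (a + b)"
  using monom_le_add[of m a 0 b] by simp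

lemma monom_le_single_iff [simp]: "monom_le (single i j) (single i k) \<longleftrightarrow> j \<le> k"
  by (auto simp: monom_le_def lookup_single when_def)

lemma monom_le_keys: "monom_le m a \<Longrightarrow> keys m \<subseteq> keys a"
  unfolding monom_le_def by (auto simp: in_keys_iff) (meson less_le_trans)

lemma monom_le_deg: "monom_le m a \<Longrightarrow> monom_deg m \<le> monom_deg a"
  using monom_deg_superset[of "keys a" m] monom_le_keys[of m a]
  by (simp add: monom_deg_def monom_le_def sum_mono)

lemma monom_le_deg_less:
  assumes "monom_le m a" "m \<noteq> a"
  shows "monom_deg m < monom_deg a"
proof -
  obtain i where i: "lookup m i < lookup a i"
    using assms unfolding monom_le_def by (metis le_neq_implies_less poly_mapping_eqI)
  then have "i \<in> keys a" by (simp add: in_keys_iff)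
  have "monom_deg m = sum (lookup m) (keys a)"
    using monom_le_keys[OF assms(1)] by (simp add: monom_deg_superset)
  also have "\<dots> < sum (lookup a) (keys a)"
    using assms(1) i \<open>i \<in> keys a\<close> unfolding monom_le_def by (intro sum_strict_mono_ex1) auto
  finally show ?thesis by (simp add: monom_deg_def)
qed

lemma monom_le_add_cancel:
  assumes "monom_le m a" "monom_le m' b" "m + m' = a + b"
  shows "m = a"
proof (rule poly_mapping_eqI)
  fix i
  have "lookup m i + lookup m' i = lookup a i + lookup b i"
    using assms(3) by (metis lookup_add)
  moreover have "lookup m i \<le> lookup a i" "lookup m' i \<le> lookup b i"
    using assms(1,2) unfolding monom_le_def by auto
  ultimately show "lookup m i = lookup a i" by linarith
qed

lemma update_eq_single_add:
  "j \<notin> keys \<alpha> \<Longrightarrow> Poly_Mapping.update j k \<alpha> = single j k + (\<alpha> :: 'a \<Rightarrow>\<^sub>0 'b::monoid_add)"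
  by (rule poly_mapping_eqI) (auto simp: lookup_update lookup_add lookup_single in_keys_iff)

lemma keys_single_add:
  "j \<notin> keys \<alpha> \<Longrightarrow> k \<noteq> 0 \<Longrightarrow> keys (single j k + (\<alpha> :: 'a \<Rightarrow>\<^sub>0 'b::monoid_add)) = insert j (keys \<alpha>)"
  by (simp add: update_eq_single_add[symmetric] keys_update)

lemma poly_mapping_single_add_induct [case_names zero single_add]:
  assumes "P 0"
    and "\<And>\<alpha> j k. j \<notin> keys \<alpha> \<Longrightarrow> k \<noteq> 0 \<Longrightarrow> P \<alpha> \<Longrightarrow> P (single j k + \<alpha>)"
  shows "P (\<alpha> :: 'a \<Rightarrow>\<^sub>0 'b::monoid_add)"
  using assms by (induction \<alpha> rule: update_induct) (simp_all add: update_eq_single_add)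

section \<open>Polynomials\<close>

lemma mconst_0 [simp]: "mconst 0 = 0"
  by (simp add: mconst_def)

lemma mconst_1 [simp]: "mconst 1 = 1"
  by (simp add: mconst_def)

lemma mconst_numeral [simp]: "mconst (numeral k) = numeral k"
  by (simp add: mconst_def)

lemma mconst_add: "mconst (a + b) = mconst a + mconst b"
  by (simp add: mconst_def single_add)

lemma mconst_uminus: "mconst (- a) = - mconst a"
  by (simp add: mconst_def single_uminus)

lemma mconst_mult: "mconst (a * b) = mconst a * mconst b"
  by (simp add: mconst_def mult_single)

lemma mconst_sum: "mconst (sum f A) = (\<Sum>x\<in>A. mconst (f x))"
  by (induction A rule: infinite_finite_induct) (simp_all add: mconst_add)

lemma lookup_mconst_mult: "lookup (mconst c * p) m = c * lookup p m"
  unfolding mconst_def mult_map_scale_conv_mult[symmetric] by (simp add: map.rep_eq when_def)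

lemma keys_mconst_mult: "keys (mconst c * p) \<subseteq> keys p"
  by (auto simp: in_keys_iff lookup_mconst_mult)

lemma single_eq_mconst_mult: "single m c = mconst c * single m 1"
  by (simp add: mconst_def mult_single)

lemma mpoly_eq_sum_monomials: "p = (\<Sum>m\<in>keys p. mconst (lookup p m) * single m 1)"
  by (rule poly_mapping_eqI)
    (simp add: single_eq_mconst_mult[symmetric] lookup_sum lookup_single when_def in_keys_iff)

definition support_le :: "mpoly \<Rightarrow> (nat \<Rightarrow>\<^sub>0 nat) \<Rightarrow> bool" where
  "support_le p a \<longleftrightarrow> (\<forall>m\<in>keys p. monom_le m a)"

lemma support_leD: "support_le p a \<Longrightarrow> lookup p m \<noteq> 0 \<Longrightarrow> monom_le m a"
  by (simp add: support_le_def in_keys_iff)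

lemma support_le_mono: "support_le p a \<Longrightarrow> monom_le a b \<Longrightarrow> support_le p b"
  unfolding support_le_def by (meson monom_le_trans)

lemma support_le_one [simp]: "support_le 1 a"
  by (simp add: support_le_def)

lemma support_le_add: "support_le p a \<Longrightarrow> support_le q a \<Longrightarrow> support_le (p + q) a"
  unfolding support_le_def using keys_add[of p q] by auto

lemma support_le_diff: "support_le p a \<Longrightarrow> support_le q a \<Longrightarrow> support_le (p - q) a"
  unfolding support_le_def using keys_diff[of p q] by auto

lemma support_le_mconst_mult: "support_le p a \<Longrightarrow> support_le (mconst c * p) a"
  unfolding support_le_def using keys_mconst_mult by blast

lemma support_le_mult: "support_le p a \<Longrightarrow> support_le q b \<Longrightarrow> support_le (p * q) (a + b)"
  unfolding support_le_def using keys_mult[of p q] by (fastforce intro: monom_le_add)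

lemma lookup_mult_top:
  assumes p: "support_le p a" and q: "support_le q b"
  shows "lookup (p * q) (a + b) = lookup p a * lookup q b"
proof -
  have inner: "lookup p l * Sum_any (\<lambda>m. lookup q m when a + b = l + m)
      = (lookup p a * lookup q b when l = a)" for l
  proof (cases "l = a")
    case True
    then show ?thesis by (simp add: add.left_cancel)
  next
    case False
    have zero: "(lookup q m when a + b = l + m) = 0" if "lookup p l \<noteq> 0" for m
    proof (cases "lookup q m = 0")
      case False
      then have "monom_le l a" "monom_le m b"
        using p q that by (auto simp: support_le_def in_keys_iff)
      then have "a + b \<noteq> l + m"
        using monom_le_add_cancel[of l a m b] \<open>l \<noteq> a\<close> by auto
      then show ?thesis by simp
    qed simp
    show ?thesis
      using False zero by (cases "lookup p l = 0") simp_all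
  qed
  show ?thesis
    unfolding lookup_mult inner by simp
qed

definition support_lt :: "mpoly \<Rightarrow> (nat \<Rightarrow>\<^sub>0 nat) \<Rightarrow> bool" where
  "support_lt p a \<longleftrightarrow> support_le p a \<and> a \<notin> keys p"

lemma support_lt_mono: "support_lt p a \<Longrightarrow> monom_le a b \<Longrightarrow> support_lt p b"
  unfolding support_lt_def support_le_def by (metis monom_le_antisym monom_le_trans)

lemma support_lt_mconst_mult: "support_lt p a \<Longrightarrow> support_lt (mconst c * p) a"
  unfolding support_lt_def using keys_mconst_mult support_le_mconst_mult by blast

lemma support_lt_mult: "support_le p a \<Longrightarrow> support_lt q b \<Longrightarrow> support_lt (p * q) (a + b)"
  using lookup_mult_top[of p a q b] by (simp add: support_lt_def support_le_mult in_keys_iff)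

lemma total_deg_le_iff: "total_deg p \<le> d \<longleftrightarrow> (\<forall>m\<in>keys p. monom_deg m \<le> d)"
  unfolding total_deg_def monom_deg_def by auto

lemma total_deg_le_if_support_le: "support_le p \<beta> \<Longrightarrow> total_deg p \<le> monom_deg \<beta>"
  by (auto simp: total_deg_le_iff support_le_def monom_le_deg)

lemma total_deg_le_pred_if_support_lt: "support_lt p \<beta> \<Longrightarrow> total_deg p \<le> monom_deg \<beta> - 1"
  unfolding total_deg_le_iff support_lt_def support_le_def using monom_le_deg_less
  by (metis Suc_diff_1 bot_nat_0.extremum_strict less_Suc_eq_le not_gr_zero)

lemma vars_in_if_support_le: "support_le p \<beta> \<Longrightarrow> keys \<beta> \<subseteq> {..<n} \<Longrightarrow> vars_in n p"
  unfolding vars_in_def support_le_def using monom_le_keys by blast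

lemma monom_deg_le_if_mult_keys:
  assumes "m \<in> keys (p * q)"
  shows "monom_deg m \<le> total_deg p + total_deg q"
proof -
  obtain u v where "u \<in> keys p" "v \<in> keys q" "m = u + v"
    using assms keys_mult by blast
  moreover have "monom_deg u \<le> total_deg p" "monom_deg v \<le> total_deg q"
    using calculation total_deg_le_iff order_refl by blast+
  ultimately show ?thesis by (simp add: monom_deg_add)
qed

section \<open>Chebyshev polynomials\<close>

lemma support_le_mvar: "support_le (mvar i) (single i 1)"
  by (simp add: support_le_def mvar_def)

lemma support_le_one_minus_mvar_sq: "support_le (1 - mvar i * mvar i) (single i 2)"
proof -
  have "support_le (mvar i * mvar i) (single i 1 + single i 1)"
    by (intro support_le_mult support_le_mvar)
  also have "single i 1 + single i 1 = single i 2"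
    by (simp add: single_add[symmetric])
  finally show ?thesis
    by (intro support_le_diff) simp_all
qed

lemma two_mvar: "2 * mvar i = single (single i 1) 2"
  unfolding mvar_def by (metis mult.right_neutral mult_single add_0 single_numeral)

lemma chebT_support: "support_le (chebT i k) (single i k)"
proof (induction i k rule: chebT.induct)
  case (3 i k)
  have "support_le (2 * mvar i) (single i 1)"
    by (simp add: two_mvar support_le_def)
  then have "support_le (2 * mvar i * chebT i (Suc k)) (single i 1 + single i (Suc k))"
    using "3.IH"(1) by (rule support_le_mult)
  also have "single i 1 + single i (Suc k) = single i (Suc (Suc k))"
    by (simp add: single_add[symmetric])
  moreover have "support_le (chebT i k) (single i (Suc (Suc k)))"
    using "3.IH"(2) by (rule support_le_mono) simp
  ultimately show ?case by (simp add: support_le_diff)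
qed (simp_all add: support_le_def mvar_def)

lemma chebT_leading_coeff: "lookup (chebT i k) (single i k) \<noteq> 0"
proof (induction i k rule: chebT.induct)
  case (3 i k)
  have "support_le (2 * mvar i) (single i 1)"
    by (simp add: two_mvar support_le_def)
  then have "lookup (2 * mvar i * chebT i (Suc k)) (single i 1 + single i (Suc k))
      = 2 * lookup (chebT i (Suc k)) (single i (Suc k))"
    by (simp add: lookup_mult_top chebT_support two_mvar)
  moreover have "lookup (chebT i k) (single i (Suc (Suc k))) = 0"
    using support_leD[OF chebT_support, of i k "single i (Suc (Suc k))"] by auto
  ultimately show ?case using "3.IH"(1) by (simp add: lookup_minus single_add[symmetric])
qed (simp_all add: mvar_def)

(* chebW i k is U_(k-1)(x_i), a Chebyshev polynomial of the second kind. *)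
fun chebW :: "nat \<Rightarrow> nat \<Rightarrow> mpoly" where
  "chebW i 0 = 0"
| "chebW i (Suc k) = mvar i * chebW i k + chebT i k"

lemma chebT_Suc_eq: "chebT i (Suc k) = mvar i * chebT i k - (1 - mvar i * mvar i) * chebW i k"
proof (induction k)
  case (Suc k)
  let ?x = "mvar i"
  have W: "(1 - ?x * ?x) * chebW i k = ?x * chebT i k - chebT i (Suc k)"
    using Suc.IH by simp
  have "chebT i (Suc (Suc k)) = 2 * ?x * chebT i (Suc k) - chebT i k"
    by simp
  also have "\<dots> = ?x * chebT i (Suc k) - (?x * ((1 - ?x * ?x) * chebW i k) + (1 - ?x * ?x) * chebT i k)"
    unfolding W by (simp add: algebra_simps)
  also have "\<dots> = ?x * chebT i (Suc k) - (1 - ?x * ?x) * chebW i (Suc k)"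
    by (simp add: algebra_simps)
  finally show ?case .
qed simp

lemma chebT_chebW_pell: "chebT i k * chebT i k + (1 - mvar i * mvar i) * (chebW i k * chebW i k) = 1"
proof (induction k)
  case (Suc k)
  then show ?case
    unfolding chebT_Suc_eq chebW.simps by (simp add: algebra_simps)
qed simp

lemma chebW_support: "support_le (chebW i k) (single i (k - 1))"
proof (induction k)
  case (Suc k)
  show ?case
  proof (cases k)
    case (Suc m)
    have "support_le (mvar i * chebW i k) (single i 1 + single i (k - 1))"
      using support_le_mvar Suc.IH by (rule support_le_mult)
    also have "single i 1 + single i (k - 1) = single i k"
      using Suc by (simp add: single_add[symmetric])
    finally show ?thesis
      using chebT_support[of i k] by (simp add: support_le_add)
  qed (simp add: support_le_def)
qed (simp add: support_le_def)

lemma chebW_support_lt: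
  assumes "k \<noteq> 0"
  shows "support_lt (chebW i k) (single i k)"
proof -
  have "support_le (chebW i k) (single i k)"
    using chebW_support by (rule support_le_mono) simp
  moreover have "lookup (chebW i k) (single i k) = 0"
  proof (rule ccontr)
    assume "lookup (chebW i k) (single i k) \<noteq> 0"
    then have "monom_le (single i k) (single i (k - 1))"
      by (rule support_leD[OF chebW_support])
    then show False
      using assms by simp
  qed
  ultimately show ?thesis
    by (simp add: support_lt_def in_keys_iff)
qed

lemma chebT_multi_zero [simp]: "chebT_multi 0 = 1"
  by (simp add: chebT_multi_def)

lemma chebT_multi_single_add:
  assumes "j \<notin> keys \<alpha>" "k \<noteq> 0"
  shows "chebT_multi (single j k + \<alpha>) = chebT j k * chebT_multi \<alpha>"
proof -
  let ?\<beta> = "single j k + \<alpha>"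
  have "lookup ?\<beta> j = k" "\<And>i. i \<in> keys \<alpha> \<Longrightarrow> lookup ?\<beta> i = lookup \<alpha> i"
    using assms(1) by (auto simp: lookup_add lookup_single when_def in_keys_iff)
  then show ?thesis
    using assms unfolding chebT_multi_def keys_single_add[OF assms]
    by simp
qed

lemma chebT_multi_support: "support_le (chebT_multi \<alpha>) \<alpha>"
proof (induction \<alpha> rule: poly_mapping_single_add_induct)
  case (single_add \<alpha> j k)
  then show ?case
    by (simp add: chebT_multi_single_add support_le_mult chebT_support)
qed (simp add: support_le_def)

lemma chebT_multi_leading_coeff: "lookup (chebT_multi \<alpha>) \<alpha> \<noteq> 0"
proof (induction \<alpha> rule: poly_mapping_single_add_induct)
  case (single_add \<alpha> j k)
  then show ?case
    by (simp add: chebT_multi_single_add lookup_mult_top chebT_support chebT_multi_support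
        chebT_leading_coeff)
qed simp

lemma one_minus_chebT_multi_sq:
  "\<exists>g. 1 - chebT_multi \<alpha> * chebT_multi \<alpha> = (\<Sum>i\<in>keys \<alpha>. (1 - mvar i * mvar i) * (g i * g i))
     \<and> (\<forall>i\<in>keys \<alpha>. support_lt (g i) \<alpha>)"
proof (induction \<alpha> rule: poly_mapping_single_add_induct)
  case (single_add \<alpha> j k)
  then obtain g where g: "1 - chebT_multi \<alpha> * chebT_multi \<alpha> = (\<Sum>i\<in>keys \<alpha>. (1 - mvar i * mvar i) * (g i * g i))"
      "\<forall>i\<in>keys \<alpha>. support_lt (g i) \<alpha>"
    by blast
  define t where "t = chebT j k"
  define w where "w = chebW j k"
  define \<beta> where "\<beta> = single j k + \<alpha>"
  define g' where "g' i = (if i = j then w else t * g i)" for i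
  have keys_\<beta>: "keys \<beta> = insert j (keys \<alpha>)"
    unfolding \<beta>_def using single_add.hyps by (rule keys_single_add)
  have "(\<Sum>i\<in>keys \<beta>. (1 - mvar i * mvar i) * (g' i * g' i))
      = (1 - mvar j * mvar j) * (w * w) + t * t * (\<Sum>i\<in>keys \<alpha>. (1 - mvar i * mvar i) * (g i * g i))"
    using single_add.hyps(1) unfolding keys_\<beta>
    by (auto simp: g'_def sum_distrib_left algebra_simps intro!: sum.cong)
  also have "\<dots> = (t * t + (1 - mvar j * mvar j) * (w * w)) - (t * chebT_multi \<alpha>) * (t * chebT_multi \<alpha>)"
    unfolding g(1)[symmetric] by (simp add: algebra_simps)
  also have "\<dots> = 1 - chebT_multi \<beta> * chebT_multi \<beta>"
    using single_add.hyps by (simp add: t_def w_def \<beta>_def chebT_chebW_pell chebT_multi_single_add)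
  finally have "1 - chebT_multi \<beta> * chebT_multi \<beta> = (\<Sum>i\<in>keys \<beta>. (1 - mvar i * mvar i) * (g' i * g' i))" ..
  moreover have "support_lt (g' i) \<beta>" if "i \<in> keys \<beta>" for i
  proof (cases "i = j")
    case True
    have "monom_le (single j k) \<beta>"
      unfolding \<beta>_def by (rule monom_le_add_right) simp
    with chebW_support_lt[OF single_add.hyps(2)] have "support_lt w \<beta>"
      unfolding w_def by (rule support_lt_mono)
    then show ?thesis
      using True by (simp add: g'_def)
  next
    case False
    then have "i \<in> keys \<alpha>"
      using that keys_\<beta> by simp
    then show ?thesis
      using False g(2) unfolding g'_def t_def \<beta>_def by (simp add: support_lt_mult chebT_support)
  qed
  ultimately show ?case
    unfolding \<beta>_def by blast
qed simp

section \<open>The truncated quadratic module\<close>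

lemma zero_in_sos_cone [simp]: "0 \<in> sos_cone n d"
  unfolding sos_cone_def by (rule CollectI, rule exI[of _ "[]"]) simp

lemma sos_cone_add: "a \<in> sos_cone n d \<Longrightarrow> b \<in> sos_cone n d \<Longrightarrow> a + b \<in> sos_cone n d"
proof -
  assume "a \<in> sos_cone n d" "b \<in> sos_cone n d"
  then obtain gs hs where "a = sum_list (map (\<lambda>g. g * g) gs)" "b = sum_list (map (\<lambda>g. g * g) hs)"
    "\<forall>g\<in>set (gs @ hs). vars_in n g \<and> 2 * int (total_deg g) \<le> d"
    unfolding sos_cone_def by auto
  then show ?thesis
    unfolding sos_cone_def mem_Collect_eq by (intro exI[of _ "gs @ hs"]) simp
qed

lemma sos_cone_mono: "s \<in> sos_cone n d \<Longrightarrow> d \<le> d' \<Longrightarrow> s \<in> sos_cone n d'"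
  unfolding sos_cone_def by force

lemma sos_cone_square: "vars_in n g \<Longrightarrow> 2 * total_deg g \<le> d \<Longrightarrow> g * g \<in> sos_cone n (int d)"
  unfolding sos_cone_def by (rule CollectI, rule exI[of _ "[g]"]) auto

lemma sos_cone_monom_deg: "s \<in> sos_cone n d \<Longrightarrow> m \<in> keys s \<Longrightarrow> int (monom_deg m) \<le> d"
proof -
  assume "s \<in> sos_cone n d" "m \<in> keys s"
  then obtain gs where gs: "\<forall>g\<in>set gs. 2 * int (total_deg g) \<le> d"
    and m: "m \<in> keys (sum_list (map (\<lambda>g. g * g) gs))"
    unfolding sos_cone_def by blast
  from m gs show ?thesis
  proof (induction gs)
    case (Cons g gs)
    then consider "m \<in> keys (g * g)" | "m \<in> keys (sum_list (map (\<lambda>g. g * g) gs))"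
      using keys_add by fastforce
    then show ?case
    proof cases
      case 1
      then show ?thesis using Cons.prems(2) monom_deg_le_if_mult_keys[of m g g] by simp
    qed (use Cons in simp)
  qed simp
qed

lemma quad_moduleI:
  "s0 \<in> sos_cone n (int r) \<Longrightarrow> (\<And>i. i < n \<Longrightarrow> s i \<in> sos_cone n (int r - 2))
    \<Longrightarrow> s0 + (\<Sum>i<n. (1 - mvar i * mvar i) * s i) \<in> quad_module n r"
  unfolding quad_module_def by blast

lemma quad_moduleE:
  assumes "p \<in> quad_module n r"
  obtains s0 s where "p = s0 + (\<Sum>i<n. (1 - mvar i * mvar i) * s i)" "s0 \<in> sos_cone n (int r)"
    "\<And>i. i < n \<Longrightarrow> s i \<in> sos_cone n (int r - 2)"
  using assms unfolding quad_module_def by blast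

lemma zero_in_quad_module: "0 \<in> quad_module n r"
  using quad_moduleI[of 0 n r "\<lambda>_. 0"] by simp

lemma quad_module_add:
  assumes "p \<in> quad_module n r" "q \<in> quad_module n r"
  shows "p + q \<in> quad_module n r"
proof -
  obtain s0 s where p: "p = s0 + (\<Sum>i<n. (1 - mvar i * mvar i) * s i)" "s0 \<in> sos_cone n (int r)"
    "\<And>i. i < n \<Longrightarrow> s i \<in> sos_cone n (int r - 2)"
    using assms(1) by (elim quad_moduleE) blast
  obtain t0 t where q: "q = t0 + (\<Sum>i<n. (1 - mvar i * mvar i) * t i)" "t0 \<in> sos_cone n (int r)"
    "\<And>i. i < n \<Longrightarrow> t i \<in> sos_cone n (int r - 2)"
    using assms(2) by (elim quad_moduleE) blast
  have "(\<Sum>i<n. (1 - mvar i * mvar i) * (s i + t i))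
      = (\<Sum>i<n. (1 - mvar i * mvar i) * s i) + (\<Sum>i<n. (1 - mvar i * mvar i) * t i)"
    by (simp only: distrib_left sum.distrib)
  then have "p + q = (s0 + t0) + (\<Sum>i<n. (1 - mvar i * mvar i) * (s i + t i))"
    unfolding p(1) q(1) by (simp add: add_ac)
  also have "\<dots> \<in> quad_module n r"
    using p q by (intro quad_moduleI sos_cone_add)
  finally show ?thesis .
qed

lemma quad_module_sum:
  "(\<And>x. x \<in> A \<Longrightarrow> f x \<in> quad_module n r) \<Longrightarrow> sum f A \<in> quad_module n r"
  by (induction A rule: infinite_finite_induct) (simp_all add: zero_in_quad_module quad_module_add)

lemma square_in_quad_module:
  "vars_in n g \<Longrightarrow> 2 * total_deg g \<le> r \<Longrightarrow> g * g \<in> quad_module n r"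
  using quad_moduleI[of "g * g" n r "\<lambda>_. 0"] by (simp add: sos_cone_square)

lemma generator_in_quad_module:
  assumes "i < n" "vars_in n g" "2 * total_deg g + 2 \<le> r"
  shows "(1 - mvar i * mvar i) * (g * g) \<in> quad_module n r"
proof -
  have "g * g \<in> sos_cone n (int r - 2)"
    using sos_cone_square[OF assms(2), of "r - 2"] assms(3) by simp
  then have "0 + (\<Sum>j<n. (1 - mvar j * mvar j) * (if j = i then g * g else 0)) \<in> quad_module n r"
    by (intro quad_moduleI) simp_all
  then show ?thesis
    using assms(1) by (simp add: if_distrib cong: if_cong)
qed

lemma quad_module_mono:
  assumes "p \<in> quad_module n r" "r \<le> r'"
  shows "p \<in> quad_module n r'"
proof -
  obtain s0 s where p: "p = s0 + (\<Sum>i<n. (1 - mvar i * mvar i) * s i)" "s0 \<in> sos_cone n (int r)"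
    "\<And>i. i < n \<Longrightarrow> s i \<in> sos_cone n (int r - 2)"
    using assms(1) by (elim quad_moduleE) blast
  have "int r \<le> int r'" "int r - 2 \<le> int r' - 2"
    using assms(2) by simp_all
  then show ?thesis
    unfolding p(1) using p(2,3) by (intro quad_moduleI) (blast intro: sos_cone_mono)+
qed

lemma total_deg_quad_module:
  assumes "p \<in> quad_module n r"
  shows "total_deg p \<le> r"
proof -
  obtain s0 s where p: "p = s0 + (\<Sum>i<n. (1 - mvar i * mvar i) * s i)" "s0 \<in> sos_cone n (int r)"
    "\<And>i. i < n \<Longrightarrow> s i \<in> sos_cone n (int r - 2)"
    using assms by (elim quad_moduleE) blast
  have "monom_deg m \<le> r" if i: "i < n" and m: "m \<in> keys ((1 - mvar i * mvar i) * s i)" for i m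
  proof -
    obtain u v where uv: "u \<in> keys (1 - mvar i * mvar i)" "v \<in> keys (s i)" "m = u + v"
      using m keys_mult by blast
    have "monom_le u (single i 2)"
      using uv(1) support_le_one_minus_mvar_sq unfolding support_le_def by blast
    then have "monom_deg u \<le> 2"
      using monom_le_deg[of u "single i 2"] by simp
    moreover have "int (monom_deg v) \<le> int r - 2"
      using sos_cone_monom_deg[OF p(3)[OF i] uv(2)] .
    ultimately show ?thesis
      using uv(3) by (simp add: monom_deg_add)
  qed
  moreover have "monom_deg m \<le> r" if "m \<in> keys s0" for m
    using sos_cone_monom_deg[OF p(2) that] by simp
  moreover have "keys p \<subseteq> keys s0 \<union> (\<Union>i<n. keys ((1 - mvar i * mvar i) * s i))"
    unfolding p(1) using keys_add[of s0] keys_sum[of "\<lambda>i. (1 - mvar i * mvar i) * s i" "{..<n}"]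
    by auto
  ultimately show ?thesis
    unfolding total_deg_le_iff by blast
qed

lemma one_minus_chebT_multi_sq_in_quad_module:
  assumes \<beta>: "keys \<beta> \<subseteq> {..<n}" "monom_deg \<beta> \<le> r" and "c \<ge> 0"
  shows "mconst c * (1 - chebT_multi \<beta> * chebT_multi \<beta>) \<in> quad_module n (2 * r)"
proof -
  obtain g where g: "1 - chebT_multi \<beta> * chebT_multi \<beta> = (\<Sum>i\<in>keys \<beta>. (1 - mvar i * mvar i) * (g i * g i))"
      "\<forall>i\<in>keys \<beta>. support_lt (g i) \<beta>"
    using one_minus_chebT_multi_sq by blast
  define h where "h = mconst (sqrt c)"
  have "h * h = mconst c"
    using assms(3) by (simp add: h_def mconst_mult[symmetric])
  then have "mconst c * (1 - chebT_multi \<beta> * chebT_multi \<beta>)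
      = (\<Sum>i\<in>keys \<beta>. (1 - mvar i * mvar i) * ((h * g i) * (h * g i)))"
    unfolding g(1) sum_distrib_left by (intro sum.cong) (simp_all add: ac_simps)
  also have "\<dots> \<in> quad_module n (2 * r)"
  proof (rule quad_module_sum)
    fix i
    assume i: "i \<in> keys \<beta>"
    then have hg: "support_lt (h * g i) \<beta>"
      using g(2) by (simp add: h_def support_lt_mconst_mult)
    have "\<beta> \<noteq> 0"
      using i by auto
    then have "2 * total_deg (h * g i) + 2 \<le> 2 * r"
      using total_deg_le_pred_if_support_lt[OF hg] \<beta>(2) monom_deg_eq_0_iff[of \<beta>] by linarith
    then show "(1 - mvar i * mvar i) * ((h * g i) * (h * g i)) \<in> quad_module n (2 * r)"
      using i \<beta>(1) hg by (intro generator_in_quad_module vars_in_if_support_le) (auto simp: support_lt_def)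
  qed
  finally show ?thesis .
qed

lemma chebT_multi_term_in_quad_module:
  assumes \<beta>: "keys \<beta> \<subseteq> {..<n}" "monom_deg \<beta> \<le> r"
  shows "mconst a * chebT_multi \<beta> + mconst \<bar>a\<bar> \<in> quad_module n (2 * r)"
proof -
  define T where "T = chebT_multi \<beta>"
  define E where "E = mconst (if a \<ge> 0 then 1 else -1)"
  define H where "H = mconst (sqrt (\<bar>a\<bar> / 2))"
  have HH: "H * H = mconst (\<bar>a\<bar> / 2)"
    by (simp add: H_def mconst_mult[symmetric])
  have "mconst a * T + mconst \<bar>a\<bar> = 2 * (H * H) * E * T + 2 * (H * H)"
    unfolding HH E_def by (simp add: mconst_mult[symmetric] flip: mconst_numeral)
  also have "\<dots> = (H * (1 + E * T)) * (H * (1 + E * T)) + H * H * (1 - T * T) - H * H * (E * E - 1) * (T * T)"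
    by (simp add: algebra_simps)
  also have "E * E = 1"
    by (simp add: E_def mconst_mult[symmetric])
  finally have decomp: "mconst a * T + mconst \<bar>a\<bar>
      = (H * (1 + E * T)) * (H * (1 + E * T)) + mconst (\<bar>a\<bar> / 2) * (1 - T * T)"
    unfolding HH by simp
  have "support_le (H * (1 + E * T)) \<beta>"
    unfolding H_def E_def T_def
    by (intro support_le_mconst_mult support_le_add support_le_one chebT_multi_support)
  then have "(H * (1 + E * T)) * (H * (1 + E * T)) \<in> quad_module n (2 * r)"
    using \<beta> total_deg_le_if_support_le
    by (intro square_in_quad_module vars_in_if_support_le) fastforce+
  moreover have "mconst (\<bar>a\<bar> / 2) * (1 - T * T) \<in> quad_module n (2 * r)"
    unfolding T_def using \<beta> by (intro one_minus_chebT_multi_sq_in_quad_module) simp_all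
  ultimately show ?thesis
    unfolding T_def[symmetric] decomp by (rule quad_module_add)
qed

section \<open>Chebyshev expansions\<close>

definition cheb_expand :: "((nat \<Rightarrow>\<^sub>0 nat) \<Rightarrow>\<^sub>0 real) \<Rightarrow> mpoly" where
  "cheb_expand c = (\<Sum>\<beta>\<in>keys c. mconst (lookup c \<beta>) * chebT_multi \<beta>)"

lemma cheb_expand_superset:
  "finite B \<Longrightarrow> keys c \<subseteq> B \<Longrightarrow> cheb_expand c = (\<Sum>\<beta>\<in>B. mconst (lookup c \<beta>) * chebT_multi \<beta>)"
  unfolding cheb_expand_def by (rule sum.mono_neutral_left) (auto simp: in_keys_iff)

lemma cheb_expand_0 [simp]: "cheb_expand 0 = 0"
  by (simp add: cheb_expand_def)

lemma cheb_expand_add: "cheb_expand (c + d) = cheb_expand c + cheb_expand d"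
proof -
  have "finite (keys c \<union> keys d)" "keys (c + d) \<subseteq> keys c \<union> keys d"
    by (simp_all add: keys_add)
  then show ?thesis
    using cheb_expand_superset[of "keys c \<union> keys d"]
    by (simp add: lookup_add mconst_add distrib_right sum.distrib)
qed

lemma cheb_expand_mconst_mult: "cheb_expand (mconst a * c) = mconst a * cheb_expand c"
  using cheb_expand_superset[of "keys c" "mconst a * c"] keys_mconst_mult[of a c]
  by (simp add: cheb_expand_def lookup_mconst_mult mconst_mult sum_distrib_left mult.assoc)

lemma cheb_expand_single: "cheb_expand (single \<beta> 1) = chebT_multi \<beta>"
  by (simp add: cheb_expand_def mconst_def)

lemma cheb_expand_eq_0: "cheb_expand c = 0 \<Longrightarrow> c = 0"
proof (rule ccontr)
  assume c: "cheb_expand c = 0" "c \<noteq> 0"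
  then have "Max (monom_deg ` keys c) \<in> monom_deg ` keys c"
    by (intro Max_in) auto
  then obtain \<alpha> where "\<alpha> \<in> keys c" "monom_deg \<alpha> = Max (monom_deg ` keys c)"
    by auto
  then have \<alpha>: "\<alpha> \<in> keys c" "\<forall>\<beta>\<in>keys c. monom_deg \<beta> \<le> monom_deg \<alpha>"
    using Max_ge[of "monom_deg ` keys c"] by auto
  have "lookup (chebT_multi \<beta>) \<alpha> = 0" if "\<beta> \<in> keys c" "\<beta> \<noteq> \<alpha>" for \<beta>
  proof (rule ccontr)
    assume "lookup (chebT_multi \<beta>) \<alpha> \<noteq> 0"
    then have "monom_le \<alpha> \<beta>"
      using support_leD[OF chebT_multi_support] by blast
    then show False
      using monom_le_deg_less \<alpha>(2) that by fastforce
  qed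
  then have "lookup (cheb_expand c) \<alpha> = lookup c \<alpha> * lookup (chebT_multi \<alpha>) \<alpha>"
    unfolding cheb_expand_def lookup_sum lookup_mconst_mult
    using \<alpha>(1) by (subst sum.remove) auto
  then show False
    using c(1) \<alpha>(1) chebT_multi_leading_coeff[of \<alpha>] by (simp add: in_keys_iff)
qed

lemma cheb_expand_inj: "cheb_expand c = cheb_expand d \<Longrightarrow> c = d"
  using cheb_expand_add[of "c - d" d] cheb_expand_eq_0[of "c - d"] by simp

lemma cheb_coeffs_cheb_expand [simp]: "cheb_coeffs (cheb_expand c) = c"
proof -
  have "cheb_coeffs (cheb_expand c) = (THE d. cheb_expand c = cheb_expand d)"
    by (simp add: cheb_coeffs_def cheb_expand_def)
  also have "\<dots> = c"
    by (rule the_equality) (simp_all add: cheb_expand_inj)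
  finally show ?thesis .
qed

definition cheb_span :: "(nat \<Rightarrow>\<^sub>0 nat) set \<Rightarrow> mpoly set" where
  "cheb_span D = {cheb_expand c | c. keys c \<subseteq> D}"

lemma zero_in_cheb_span: "0 \<in> cheb_span D"
  unfolding cheb_span_def mem_Collect_eq by (intro exI[of _ 0]) simp

lemma cheb_span_add:
  assumes "p \<in> cheb_span D" "q \<in> cheb_span D"
  shows "p + q \<in> cheb_span D"
proof -
  obtain c d where "keys c \<subseteq> D" "p = cheb_expand c" "keys d \<subseteq> D" "q = cheb_expand d"
    using assms unfolding cheb_span_def by blast
  then have "keys (c + d) \<subseteq> D" "p + q = cheb_expand (c + d)"
    using keys_add[of c d] by (auto simp: cheb_expand_add)
  then show ?thesis
    unfolding cheb_span_def by blast
qed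

lemma cheb_span_mconst_mult:
  assumes "p \<in> cheb_span D"
  shows "mconst a * p \<in> cheb_span D"
proof -
  obtain c where "keys c \<subseteq> D" "p = cheb_expand c"
    using assms unfolding cheb_span_def by blast
  then have "keys (mconst a * c) \<subseteq> D" "mconst a * p = cheb_expand (mconst a * c)"
    using keys_mconst_mult[of a c] by (auto simp: cheb_expand_mconst_mult)
  then show ?thesis
    unfolding cheb_span_def by blast
qed

lemma cheb_span_sum: "(\<And>x. x \<in> A \<Longrightarrow> f x \<in> cheb_span D) \<Longrightarrow> sum f A \<in> cheb_span D"
  by (induction A rule: infinite_finite_induct) (simp_all add: zero_in_cheb_span cheb_span_add)

lemma chebT_multi_in_cheb_span: "\<beta> \<in> D \<Longrightarrow> chebT_multi \<beta> \<in> cheb_span D"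
  unfolding cheb_span_def mem_Collect_eq
  by (intro exI[of _ "single \<beta> 1"]) (simp add: cheb_expand_single)

lemma monomial_in_cheb_span:
  assumes down: "\<And>m x. m \<in> D \<Longrightarrow> monom_le x m \<Longrightarrow> x \<in> D"
  shows "\<alpha> \<in> D \<Longrightarrow> single \<alpha> 1 \<in> cheb_span D"
proof (induction "monom_deg \<alpha>" arbitrary: \<alpha> rule: less_induct)
  case less
  define T where "T = chebT_multi \<alpha>"
  define R where "R = T - single \<alpha> (lookup T \<alpha>)"
  have "mconst (lookup R m) * single m 1 \<in> cheb_span D" if m: "m \<in> keys R" for m
  proof -
    have "m \<noteq> \<alpha>" "lookup T m \<noteq> 0"
      using m by (auto simp: R_def in_keys_iff lookup_minus lookup_single)
    then have "monom_le m \<alpha>" "m \<noteq> \<alpha>"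
      using support_leD[OF chebT_multi_support] T_def by blast+
    then have "monom_deg m < monom_deg \<alpha>" "m \<in> D"
      using monom_le_deg_less down less.prems by blast+
    then show ?thesis
      using less.hyps by (intro cheb_span_mconst_mult)
  qed
  then have "R \<in> cheb_span D"
    by (subst mpoly_eq_sum_monomials) (rule cheb_span_sum)
  moreover have "T \<in> cheb_span D"
    unfolding T_def using less.prems by (rule chebT_multi_in_cheb_span)
  moreover have "single \<alpha> 1 = mconst (1 / lookup T \<alpha>) * (T + mconst (- 1) * R)"
  proof -
    have "T + mconst (- 1) * R = mconst (lookup T \<alpha>) * single \<alpha> 1"
      by (simp add: R_def mconst_uminus single_eq_mconst_mult[symmetric])
    then show ?thesis
      using chebT_multi_leading_coeff[of \<alpha>]
      by (simp add: T_def mult.assoc[symmetric] mconst_mult[symmetric])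
  qed
  ultimately show ?case
    by (simp add: cheb_span_add cheb_span_mconst_mult)
qed

lemma mpoly_in_cheb_span:
  assumes "\<And>m x. m \<in> D \<Longrightarrow> monom_le x m \<Longrightarrow> x \<in> D" "keys p \<subseteq> D"
  shows "p \<in> cheb_span D"
proof (subst mpoly_eq_sum_monomials, rule cheb_span_sum)
  fix m
  assume "m \<in> keys p"
  then show "mconst (lookup p m) * single m 1 \<in> cheb_span D"
    using assms by (intro cheb_span_mconst_mult monomial_in_cheb_span) auto
qed

theorem theorem4:
  fixes n r :: nat and f q :: mpoly
  assumes "vars_in n f" and "vars_in n q"
    and "q \<in> quad_module n r"
    and "total_deg f \<le> r"
  shows "f + mconst (cheb_norm1 (f - q)) \<in> quad_module n (2 * r)"
proof -
  define D where "D = {m. keys m \<subseteq> {..<n} \<and> monom_deg m \<le> r}"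
  have "keys (f - q) \<subseteq> D"
    using keys_diff[of f q] assms total_deg_quad_module[OF assms(3)]
    unfolding D_def vars_in_def total_deg_le_iff by blast
  moreover have "x \<in> D" if "m \<in> D" "monom_le x m" for m x
    using that monom_le_keys monom_le_deg unfolding D_def by fastforce
  ultimately have "f - q \<in> cheb_span D"
    by (rule mpoly_in_cheb_span[rotated])
  then obtain c where c: "keys c \<subseteq> D" "f - q = cheb_expand c"
    unfolding cheb_span_def by blast
  have norm: "cheb_norm1 (f - q) = (\<Sum>\<beta>\<in>keys c. \<bar>lookup c \<beta>\<bar>)"
    by (simp add: c(2) cheb_norm1_def)
  have "f = q + cheb_expand c"
    by (simp add: c(2)[symmetric])
  then have "f + mconst (cheb_norm1 (f - q))
      = q + (\<Sum>\<beta>\<in>keys c. mconst (lookup c \<beta>) * chebT_multi \<beta> + mconst \<bar>lookup c \<beta>\<bar>)"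
    unfolding norm by (simp add: cheb_expand_def mconst_sum sum.distrib add.assoc)
  also have "\<dots> \<in> quad_module n (2 * r)"
  proof (rule quad_module_add)
    show "q \<in> quad_module n (2 * r)"
      using quad_module_mono[OF assms(3)] by simp
    show "(\<Sum>\<beta>\<in>keys c. mconst (lookup c \<beta>) * chebT_multi \<beta> + mconst \<bar>lookup c \<beta>\<bar>) \<in> quad_module n (2 * r)"
      using c(1) unfolding D_def by (intro quad_module_sum chebT_multi_term_in_quad_module) auto
  qed
  finally show ?thesis .
qed

end
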